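(* Suppose there is a norm $\|\cdot\|$ on $\mathbb R^n$ and $L>0$ such that $f$ is $2$-uniformly smooth on $\mathrm{dom}(\Psi)$ with constant $L$. (a) If moreover $\Psi$ is $2$-uniformly convex on $\mathrm{dom}(\Psi)$ with constant $\mu>0$, then $(\mathcal D,\mathrm{gap})$ satisfies the $(2,1)$-growth property with $M=2L/\mu$. (b) If $\Psi=\delta_C$ is the indicator function of a closed convex set $C\subseteq\mathbb R^n$ which is $2$-uniformly convex with constant $\mu>0$, and $\ell:=\inf_{x\in C}\|\nabla f(x)\|^*>0$, then $(\mathcal D,\mathrm{gap})$ satisfies the $(2,1)$-growth property with $M=2L/(\ell\mu)$. Here the $(2,1)$-growth property with constant $M$ means: for all $x\in\mathrm{dom}(\Psi)$, $g=\nabla f(x)$, $s\in\partial\Psi^*(-g)$, $\mathcal D(x,s,\theta)\le\frac{M\theta^2}{2}\mathrm{gap}(x,g)$ for all $\theta\in[0,1]$.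
   Context: Let $f,\Psi:\mathbb{R}^n\to\mathbb{R}\cup\{\infty\}$ be closed proper convex functions such that (A1) $f$ is differentiable on $\mathrm{dom}(\Psi)$, and (A2) for every $x\in\mathrm{dom}(f)$ the set $\arg\min_s\{\langle\nabla f(x),s\rangle+\Psi(s)\}$ is nonempty. $f^*,\Psi^*$ denote convex conjugates; $\arg\min_y\{\langle g,y\rangle+\Psi(y)\}=\partial\Psi^*(-g)$. $D_f(y,x)=f(y)-f(x)-\langle\nabla f(x),y-x\rangle$. $\mathrm{gap}(x,u)=f(x)+\Psi(x)+f^*(u)+\Psi^*(-u)$. $\mathcal{D}(x,s,\theta)=D_f(x+\theta(s-x),x)+\Psi(x+\theta(s-x))-(1-\theta)\Psi(x)-\theta\Psi(s)$. $\|\cdot\|^*$ is the dual norm. $f$ is $q$-uniformly smooth on $C$ with constant $L$ if for all $x,y\in C$, $\theta\in[0,1]$: $f(x+\theta(y-x))\ge(1-\theta)f(x)+\theta f(y)-\frac Lq\theta(1-\theta)\|y-x\|^q$. $\Psi$ is $p$-uniformly convex on $C$ with constant $\mu$ ($p\ge2$) if for all $x,y\in C$, $\theta\in[0,1]$: $\Psi(x+\theta(y-x))\le(1-\theta)\Psi(x)+\theta\Psi(y)-\frac\mu p\theta(1-\theta)\|y-x\|^p$. A closed convex set $C$ is $p$-uniformly convex with constant $\mu$ ($p\ge2$) if for all $x,y\in C$, $\theta\in[0,1]$ and $\|z\|\le1$: $x+\theta(y-x)+\frac\mu p\theta(1-\theta)\|y-x\|^pz\in C$. *)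

theory Defs
  imports "HOL-Analysis.Analysis" "HOL-Library.Extended_Real"
begin

text \<open>Extended-real valued functions on R^n (modelled by a euclidean_space type
 with its standard inner product).\<close>

definition edom :: "('a \<Rightarrow> ereal) \<Rightarrow> 'a set" where
  "edom f = {x. f x \<noteq> \<infinity>}"

definition proper_fun :: "('a \<Rightarrow> ereal) \<Rightarrow> bool" where
  "proper_fun f \<longleftrightarrow> (\<forall>x. f x \<noteq> -\<infinity>) \<and> (\<exists>x. f x \<noteq> \<infinity>)"

definition closed_fun :: "('a::topological_space \<Rightarrow> ereal) \<Rightarrow> bool" where
  "closed_fun f \<longleftrightarrow> (\<forall>c::real. closed {x. f x \<le> ereal c})"

definition convex_efun :: "('a::real_vector \<Rightarrow> ereal) \<Rightarrow> bool" where
  "convex_efun f \<longleftrightarrow> (\<forall>x y. \<forall>\<theta>\<in>{0..1::real}.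
      f (x + \<theta> *\<^sub>R (y - x)) \<le> ereal (1 - \<theta>) * f x + ereal \<theta> * f y)"

definition conj_fun :: "('a::real_inner \<Rightarrow> ereal) \<Rightarrow> 'a \<Rightarrow> ereal" where
  "conj_fun f u = (SUP x. ereal (u \<bullet> x) - f x)"

definition esubdiff :: "('a::real_inner \<Rightarrow> ereal) \<Rightarrow> 'a \<Rightarrow> 'a set" where
  "esubdiff h v = {s. \<bar>h v\<bar> \<noteq> \<infinity> \<and> (\<forall>w. h v + ereal (s \<bullet> (w - v)) \<le> h w)}"

definition has_grad :: "('a::euclidean_space \<Rightarrow> ereal) \<Rightarrow> 'a \<Rightarrow> 'a \<Rightarrow> bool" where
  "has_grad f g x \<longleftrightarrow> (\<exists>e>0. \<forall>y\<in>ball x e. \<bar>f y\<bar> \<noteq> \<infinity>) \<and>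
      ((\<lambda>y. real_of_ereal (f y)) has_derivative (\<lambda>h. g \<bullet> h)) (at x)"

definition argmin_lin :: "'a::real_inner \<Rightarrow> ('a \<Rightarrow> ereal) \<Rightarrow> 'a set" where
  "argmin_lin g Psi = {s. \<forall>t. ereal (g \<bullet> s) + Psi s \<le> ereal (g \<bullet> t) + Psi t}"

definition is_norm :: "('a::real_vector \<Rightarrow> real) \<Rightarrow> bool" where
  "is_norm N \<longleftrightarrow> (\<forall>x. N x \<ge> 0) \<and> (\<forall>x. N x = 0 \<longleftrightarrow> x = 0) \<and>
     (\<forall>a x. N (a *\<^sub>R x) = \<bar>a\<bar> * N x) \<and> (\<forall>x y. N (x + y) \<le> N x + N y)"

definition dual_norm :: "('a::real_inner \<Rightarrow> real) \<Rightarrow> 'a \<Rightarrow> real" where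
  "dual_norm N g = Sup {g \<bullet> x | x. N x \<le> 1}"

definition bregman :: "('a::real_inner \<Rightarrow> ereal) \<Rightarrow> ('a \<Rightarrow> 'a) \<Rightarrow> 'a \<Rightarrow> 'a \<Rightarrow> ereal" where
  "bregman f gradf y x = f y - f x - ereal (gradf x \<bullet> (y - x))"

definition gap :: "('a::real_inner \<Rightarrow> ereal) \<Rightarrow> ('a \<Rightarrow> ereal) \<Rightarrow> 'a \<Rightarrow> 'a \<Rightarrow> ereal" where
  "gap f Psi x u = f x + Psi x + conj_fun f u + conj_fun Psi (- u)"

definition Dcal :: "('a::real_inner \<Rightarrow> ereal) \<Rightarrow> ('a \<Rightarrow> ereal) \<Rightarrow> ('a \<Rightarrow> 'a) \<Rightarrow> 'a \<Rightarrow> 'a \<Rightarrow> real \<Rightarrow> ereal" where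
  "Dcal f Psi gradf x s \<theta> =
     bregman f gradf (x + \<theta> *\<^sub>R (s - x)) x + Psi (x + \<theta> *\<^sub>R (s - x))
       - ereal (1 - \<theta>) * Psi x - ereal \<theta> * Psi s"

definition unif_smooth :: "('a::real_vector \<Rightarrow> ereal) \<Rightarrow> ('a \<Rightarrow> real) \<Rightarrow> real \<Rightarrow> real \<Rightarrow> 'a set \<Rightarrow> bool" where
  "unif_smooth f N q L C \<longleftrightarrow> (\<forall>x\<in>C. \<forall>y\<in>C. \<forall>\<theta>\<in>{0..1}.
     f (x + \<theta> *\<^sub>R (y - x)) \<ge> ereal (1 - \<theta>) * f x + ereal \<theta> * f y
        - ereal (L / q * \<theta> * (1 - \<theta>) * N (y - x) powr q))"

definition unif_convex_fun :: "('a::real_vector \<Rightarrow> ereal) \<Rightarrow> ('a \<Rightarrow> real) \<Rightarrow> real \<Rightarrow> real \<Rightarrow> 'a set \<Rightarrow> bool" where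
  "unif_convex_fun Psi N p \<mu> C \<longleftrightarrow> (\<forall>x\<in>C. \<forall>y\<in>C. \<forall>\<theta>\<in>{0..1}.
     Psi (x + \<theta> *\<^sub>R (y - x)) \<le> ereal (1 - \<theta>) * Psi x + ereal \<theta> * Psi y
        - ereal (\<mu> / p * \<theta> * (1 - \<theta>) * N (y - x) powr p))"

definition unif_convex_set :: "'a::real_vector set \<Rightarrow> ('a \<Rightarrow> real) \<Rightarrow> real \<Rightarrow> real \<Rightarrow> bool" where
  "unif_convex_set C N p \<mu> \<longleftrightarrow> (\<forall>x\<in>C. \<forall>y\<in>C. \<forall>\<theta>\<in>{0..1}. \<forall>z. N z \<le> 1 \<longrightarrow>
     x + \<theta> *\<^sub>R (y - x) + (\<mu> / p * \<theta> * (1 - \<theta>) * N (y - x) powr p) *\<^sub>R z \<in> C)"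

definition indicator_e :: "'a set \<Rightarrow> 'a \<Rightarrow> ereal" where
  "indicator_e C x = (if x \<in> C then 0 else \<infinity>)"

definition growth21 :: "('a::real_inner \<Rightarrow> ereal) \<Rightarrow> ('a \<Rightarrow> ereal) \<Rightarrow> ('a \<Rightarrow> 'a) \<Rightarrow> real \<Rightarrow> bool" where
  "growth21 f Psi gradf M \<longleftrightarrow> (\<forall>x\<in>edom Psi. \<forall>s\<in>esubdiff (conj_fun Psi) (- gradf x).
     \<forall>\<theta>\<in>{0..1}. Dcal f Psi gradf x s \<theta> \<le> ereal (M * \<theta>\<^sup>2 / 2) * gap f Psi x (gradf x))"

end

theory Submission
  imports Defs
begin

text \<open>
  Since \<open>\<Psi>\<close> is closed, separating a point below its epigraph shows that every
  \<open>s \<in> \<partial>\<Psi>\<^sup>*(-g)\<close>, \<open>g = \<nabla>f(x)\<close>, minimises \<open>\<langle>g,\<cdot>\<rangle> + \<Psi>\<close> with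
  \<open>\<Psi>\<^sup>*(-g) = -\<langle>g,s\<rangle> - \<Psi>(s)\<close>; together with \<open>f\<^sup>*(g) = \<langle>g,x\<rangle> - f(x)\<close> this gives
  \<open>gap(x,g) = \<Psi>(x) - \<Psi>(s) + \<langle>g,x - s\<rangle>\<close>. Convexity of \<open>\<Psi>\<close> bounds \<open>\<D>(x,s,\<theta>)\<close> by the
  Bregman term, which smoothness bounds by \<open>L/2 \<theta>\<^sup>2 \<parallel>s - x\<parallel>\<^sup>2\<close>, so a bound
  \<open>gap \<ge> \<kappa> \<parallel>s - x\<parallel>\<^sup>2\<close> yields the growth property with \<open>M = L/\<kappa>\<close>.
  Comparing \<open>s\<close> with the points \<open>x + \<tau>(s - x)\<close> and letting \<open>\<tau> \<rightarrow> 1\<close> gives \<open>\<kappa> = \<mu>/2\<close>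
  for uniformly convex \<open>\<Psi>\<close>; for a uniformly convex set the same points carry a ball
  of radius \<open>\<mu>/2 \<tau>(1 - \<tau>)\<parallel>s - x\<parallel>\<^sup>2\<close> inside \<open>C\<close>, which gives \<open>\<kappa> = \<ell>\<mu>/2\<close>.
\<close>

lemma is_norm_zero: "is_norm N \<Longrightarrow> N 0 = 0"
  unfolding is_norm_def by blast

lemma is_norm_minus: "is_norm N \<Longrightarrow> N (- x) = N x"
  unfolding is_norm_def by (metis abs_minus_cancel abs_one mult_1 scaleR_minus1_left)

lemma is_norm_powr_two: "is_norm N \<Longrightarrow> N x powr 2 = (N x)\<^sup>2"
  unfolding is_norm_def by simp

lemma is_norm_convex_on: "is_norm N \<Longrightarrow> convex_on UNIV N"
proof (intro convex_onI)
  fix t :: real and x y assume N: "is_norm N" and t: "0 < t" "t < 1"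
  then have "N ((1 - t) *\<^sub>R x + t *\<^sub>R y) \<le> N ((1 - t) *\<^sub>R x) + N (t *\<^sub>R y)"
    unfolding is_norm_def by blast
  then show "N ((1 - t) *\<^sub>R x + t *\<^sub>R y) \<le> (1 - t) * N x + t * N y"
    using N t unfolding is_norm_def by simp
qed simp

lemma is_norm_lower_bound:
  fixes N :: "'a::euclidean_space \<Rightarrow> real"
  assumes N: "is_norm N"
  obtains m where "m > 0" "\<And>x. m * norm x \<le> N x"
proof -
  obtain b :: 'a where "b \<in> Basis" using nonempty_Basis by blast
  then have "sphere (0::'a) 1 \<noteq> {}" by (auto intro!: exI[of _ b])
  moreover have "continuous_on (sphere 0 1) N"
    using convex_on_continuous[OF open_UNIV is_norm_convex_on[OF N]] by (rule continuous_on_subset) simp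
  ultimately obtain x0 where x0: "x0 \<in> sphere 0 1" "\<And>y. y \<in> sphere 0 1 \<Longrightarrow> N x0 \<le> N y"
    using continuous_attains_inf[OF compact_sphere] by blast
  show thesis
  proof
    show "N x0 > 0" using x0(1) N unfolding is_norm_def by (metis less_eq_real_def norm_zero mem_sphere_0 zero_neq_one)
    show "N x0 * norm x \<le> N x" for x
    proof (cases "x = 0")
      case False
      have "N x0 \<le> N ((1 / norm x) *\<^sub>R x)" using x0(2) False by simp
      also have "\<dots> = N x / norm x" using N False unfolding is_norm_def by simp
      finally show ?thesis using False by (simp add: field_simps)
    qed (simp add: is_norm_zero[OF N])
  qed
qed

lemma dual_norm_unit_ball_bdd_above:
  fixes N :: "'a::euclidean_space \<Rightarrow> real"
  assumes N: "is_norm N"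
  shows "bdd_above {g \<bullet> x | x. N x \<le> 1}"
proof -
  obtain m where m: "m > 0" "\<And>x. m * norm x \<le> N x" using is_norm_lower_bound[OF N] by blast
  show ?thesis
  proof (rule bdd_aboveI[of _ "norm g / m"], clarify)
    fix x :: 'a assume "N x \<le> 1"
    then have "norm x \<le> 1 / m" using m order_trans[OF m(2)[of x]] by (simp add: field_simps)
    then have "norm g * norm x \<le> norm g / m" by (simp add: mult_left_mono divide_inverse)
    then show "g \<bullet> x \<le> norm g / m" using norm_cauchy_schwarz by (rule order_trans[rotated])
  qed
qed

lemma dual_norm_nonneg:
  fixes N :: "'a::euclidean_space \<Rightarrow> real"
  assumes "is_norm N" shows "0 \<le> dual_norm N g"
  unfolding dual_norm_def
  by (rule cSup_upper[OF _ dual_norm_unit_ball_bdd_above[OF assms]])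
     (auto intro!: exI[of _ 0] simp: is_norm_zero[OF assms])

lemma dual_norm_le:
  assumes "is_norm N" "\<And>z. N z \<le> 1 \<Longrightarrow> g \<bullet> z \<le> b"
  shows "dual_norm N g \<le> b"
  unfolding dual_norm_def
  by (rule cSup_least) (use assms is_norm_zero[OF assms(1)] in \<open>auto intro!: exI[of _ 0]\<close>)

lemma edom_finite:
  assumes "proper_fun f" "x \<in> edom f"
  obtains r where "f x = ereal r"
  using assms unfolding proper_fun_def edom_def by (cases "f x") auto

lemma edom_segment:
  assumes pr: "proper_fun Psi" and cv: "convex_efun Psi"
    and x: "x \<in> edom Psi" and y: "y \<in> edom Psi" and th: "\<theta> \<in> {0..1}"
  shows "x + \<theta> *\<^sub>R (y - x) \<in> edom Psi"
proof -
  obtain px py where "Psi x = ereal px" "Psi y = ereal py"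
    using edom_finite[OF pr x] edom_finite[OF pr y] by metis
  moreover have "Psi (x + \<theta> *\<^sub>R (y - x)) \<le> ereal (1 - \<theta>) * Psi x + ereal \<theta> * Psi y"
    using cv th unfolding convex_efun_def by blast
  ultimately show ?thesis unfolding edom_def by auto
qed

lemma closed_epigraph:
  fixes Psi :: "'a::metric_space \<Rightarrow> ereal"
  assumes "closed_fun Psi"
  shows "closed {p. Psi (fst p) \<le> ereal (snd p)}"
  unfolding closed_sequential_limits
proof (intro allI impI, elim conjE)
  fix P :: "nat \<Rightarrow> 'a \<times> real" and l
  assume epi: "\<forall>n. P n \<in> {p. Psi (fst p) \<le> ereal (snd p)}" and lim: "P \<longlonglongrightarrow> l"
  have "Psi (fst l) \<le> ereal (snd l) + ereal e" if e: "e > 0" for e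
  proof -
    have "eventually (\<lambda>n. snd (P n) < snd l + e) sequentially"
      using order_tendstoD(2)[OF tendsto_snd[OF lim], of "snd l + e"] e by simp
    then have "eventually (\<lambda>n. fst (P n) \<in> {x. Psi x \<le> ereal (snd l + e)}) sequentially"
      by eventually_elim (use epi in \<open>auto intro: order_trans\<close>)
    then have "fst l \<in> {x. Psi x \<le> ereal (snd l + e)}"
      using assms unfolding closed_fun_def
      by (intro Lim_in_closed_set[OF _ _ _ tendsto_fst[OF lim]]) auto
    then show ?thesis by simp
  qed
  then show "l \<in> {p. Psi (fst p) \<le> ereal (snd p)}" by (simp add: ereal_le_epsilon2)
qed

lemma convex_epigraph:
  fixes Psi :: "'a::real_vector \<Rightarrow> ereal"
  assumes pr: "proper_fun Psi" and cv: "convex_efun Psi"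
  shows "convex {p. Psi (fst p) \<le> ereal (snd p)}"
proof (rule convexI)
  fix p q :: "'a \<times> real" and u v :: real
  assume p: "p \<in> {p. Psi (fst p) \<le> ereal (snd p)}" and q: "q \<in> {p. Psi (fst p) \<le> ereal (snd p)}"
    and uv: "0 \<le> u" "0 \<le> v" "u + v = 1"
  obtain r1 r2 where r: "Psi (fst p) = ereal r1" "r1 \<le> snd p" "Psi (fst q) = ereal r2" "r2 \<le> snd q"
    using p q pr unfolding proper_fun_def by (cases "Psi (fst p)"; cases "Psi (fst q)") auto
  have u: "u = 1 - v" using uv by simp
  have "Psi (u *\<^sub>R fst p + v *\<^sub>R fst q) = Psi (fst p + v *\<^sub>R (fst q - fst p))"
    by (simp add: u algebra_simps)
  also have "\<dots> \<le> ereal (1 - v) * Psi (fst p) + ereal v * Psi (fst q)"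
    using cv uv unfolding convex_efun_def by auto
  also have "\<dots> \<le> ereal (u * snd p + v * snd q)"
    using r uv by (simp add: u add_mono mult_left_mono)
  finally show "u *\<^sub>R p + v *\<^sub>R q \<in> {p. Psi (fst p) \<le> ereal (snd p)}" by simp
qed

lemma conj_fun_ge: "ereal (u \<bullet> y) - Psi y \<le> conj_fun Psi u"
  unfolding conj_fun_def by (rule SUP_upper) simp

lemma epigraph_separation:
  fixes Psi :: "'a::euclidean_space \<Rightarrow> ereal"
  assumes cl: "closed_fun Psi" and pr: "proper_fun Psi" and cv: "convex_efun Psi"
    and below: "\<not> Psi s \<le> ereal a"
  obtains v \<beta> b where "v \<bullet> s + \<beta> * a < b" "\<beta> \<ge> 0" "\<And>y t. Psi y \<le> ereal t \<Longrightarrow> b < v \<bullet> y + \<beta> * t"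
proof -
  obtain vb b where sep: "inner vb (s, a) < b" "\<forall>p\<in>{p. Psi (fst p) \<le> ereal (snd p)}. b < inner vb p"
    using separating_hyperplane_closed_point[OF convex_epigraph[OF pr cv] closed_epigraph[OF cl]] below
    by fastforce
  obtain v \<beta> where vb: "vb = (v, \<beta>)" by fastforce
  have epi: "b < v \<bullet> y + \<beta> * t" if "Psi y \<le> ereal t" for y t
    using sep(2) that unfolding vb by auto
  have "\<beta> \<ge> 0"
  proof (rule ccontr)
    assume "\<not> \<beta> \<ge> 0"
    obtain y0 t0 where t0: "Psi y0 = ereal t0"
      using pr unfolding proper_fun_def by (metis ereal_cases)
    define t where "t = max t0 ((b - v \<bullet> y0) / \<beta>)"
    have "b < v \<bullet> y0 + \<beta> * t" by (rule epi) (simp add: t0 t_def)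
    moreover have "\<beta> * t \<le> \<beta> * ((b - v \<bullet> y0) / \<beta>)"
      using \<open>\<not> \<beta> \<ge> 0\<close> by (intro mult_left_mono_neg) (auto simp: t_def)
    ultimately show False using \<open>\<not> \<beta> \<ge> 0\<close> by simp
  qed
  then show thesis using that sep(1) epi unfolding vb by simp
qed

lemma esubdiff_conj_fun_eq:
  fixes Psi :: "'a::euclidean_space \<Rightarrow> ereal"
  assumes cl: "closed_fun Psi" and pr: "proper_fun Psi" and cv: "convex_efun Psi"
    and s: "s \<in> esubdiff (conj_fun Psi) u"
  shows "conj_fun Psi u = ereal (u \<bullet> s) - Psi s"
proof -
  obtain c where c: "conj_fun Psi u = ereal c"
    using s unfolding esubdiff_def by (cases "conj_fun Psi u") auto
  have sub: "ereal (c + s \<bullet> (w - u)) \<le> conj_fun Psi w" for w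
    using s c unfolding esubdiff_def by auto
  have FY: "u \<bullet> y - r \<le> c" if "Psi y = ereal r" for y r
    using conj_fun_ge[of u y Psi] c that by simp
  have "Psi s \<le> ereal (u \<bullet> s - c)"
  proof (rule ccontr)
    assume "\<not> Psi s \<le> ereal (u \<bullet> s - c)"
    then obtain v \<beta> b where sep: "v \<bullet> s + \<beta> * (u \<bullet> s - c) < b" and \<beta>: "\<beta> \<ge> 0"
      and epi: "\<And>y t. Psi y \<le> ereal t \<Longrightarrow> b < v \<bullet> y + \<beta> * t"
      using epigraph_separation[OF cl pr cv] by metis
    \<comment> \<open>tilting \<open>u\<close> towards the separating functional lowers the conjugate too fast\<close>
    define w where "w = (1 / (1 + \<beta>)) *\<^sub>R (u - v)"
    have w: "(1 + \<beta>) * (w \<bullet> z) = u \<bullet> z - v \<bullet> z" for z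
      using \<beta> by (simp add: w_def inner_diff_left)
    have "conj_fun Psi w \<le> ereal ((c - b) / (1 + \<beta>))"
      unfolding conj_fun_def
    proof (rule SUP_least)
      fix y
      show "ereal (w \<bullet> y) - Psi y \<le> ereal ((c - b) / (1 + \<beta>))"
      proof (cases "Psi y")
        case (real r)
        have "b < v \<bullet> y + \<beta> * r" using epi[of y r] real by simp
        moreover have "(1 + \<beta>) * (w \<bullet> y - r) = (u \<bullet> y - r) - (v \<bullet> y + \<beta> * r)"
          by (simp only: right_diff_distrib w) (simp add: distrib_right)
        ultimately have "(1 + \<beta>) * (w \<bullet> y - r) \<le> c - b"
          using FY[OF real] by linarith
        then show ?thesis using real \<beta> by (simp add: pos_le_divide_eq mult.commute)
      qed (use pr in \<open>auto simp: proper_fun_def\<close>)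
    qed
    with sub[of w] have "c + s \<bullet> (w - u) \<le> (c - b) / (1 + \<beta>)"
      by (meson ereal_less_eq(3) order_trans)
    then have "(1 + \<beta>) * (c + s \<bullet> (w - u)) \<le> c - b"
      using \<beta> by (simp add: pos_le_divide_eq mult.commute)
    moreover have "(1 + \<beta>) * (c + s \<bullet> (w - u)) = (1 + \<beta>) * c + (u \<bullet> s - v \<bullet> s) - (1 + \<beta>) * (u \<bullet> s)"
      by (simp only: inner_diff_right distrib_left right_diff_distrib inner_commute[of s] w)
    ultimately show False
      using sep by (simp add: algebra_simps)
  qed
  then obtain ps where ps: "Psi s = ereal ps" "ps \<le> u \<bullet> s - c"
    using pr unfolding proper_fun_def by (cases "Psi s") auto
  then show ?thesis using FY[OF ps(1)] c by simp
qed

lemma esubdiff_conj_fun_edom: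
  fixes Psi :: "'a::euclidean_space \<Rightarrow> ereal"
  assumes "closed_fun Psi" "proper_fun Psi" "convex_efun Psi" and s: "s \<in> esubdiff (conj_fun Psi) u"
  shows "s \<in> edom Psi"
  using esubdiff_conj_fun_eq[OF assms] s unfolding esubdiff_def edom_def by auto

lemma esubdiff_conj_fun_argmin:
  fixes Psi :: "'a::euclidean_space \<Rightarrow> ereal"
  assumes "closed_fun Psi" "proper_fun Psi" "convex_efun Psi" and s: "s \<in> esubdiff (conj_fun Psi) u"
  shows "s \<in> argmin_lin (- u) Psi"
  unfolding argmin_lin_def
proof (intro CollectI allI)
  fix t
  obtain ps where ps: "Psi s = ereal ps"
    using edom_finite[OF assms(2) esubdiff_conj_fun_edom[OF assms]] .
  have FY: "ereal (u \<bullet> t) - Psi t \<le> ereal (u \<bullet> s - ps)"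
    using conj_fun_ge[of u t Psi] esubdiff_conj_fun_eq[OF assms] ps by simp
  show "ereal (- u \<bullet> s) + Psi s \<le> ereal (- u \<bullet> t) + Psi t"
    using FY ps assms(2) unfolding proper_fun_def by (cases "Psi t") auto
qed

lemma has_grad_finite: "has_grad f g x \<Longrightarrow> \<bar>f x\<bar> \<noteq> \<infinity>"
  unfolding has_grad_def by (metis centre_in_ball)

lemma has_grad_line_derivative:
  assumes "has_grad f g x"
  shows "((\<lambda>\<theta>. real_of_ereal (f (x + \<theta> *\<^sub>R d))) has_real_derivative (g \<bullet> d)) (at 0)"
proof -
  have line: "((\<lambda>\<theta>::real. x + \<theta> *\<^sub>R d) has_derivative (\<lambda>h. h *\<^sub>R d)) (at 0)"
    by (auto intro!: derivative_eq_intros)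
  have "((\<lambda>y. real_of_ereal (f y)) has_derivative (\<lambda>h. g \<bullet> h)) (at ((\<lambda>\<theta>. x + \<theta> *\<^sub>R d) 0))"
    using assms unfolding has_grad_def by simp
  from diff_chain_at[OF line this]
  have "((\<lambda>\<theta>. real_of_ereal (f (x + \<theta> *\<^sub>R d))) has_derivative (\<lambda>h. g \<bullet> (h *\<^sub>R d))) (at 0)"
    by (simp add: o_def)
  then show ?thesis unfolding has_field_derivative_def by (simp add: mult.commute[of _ "g \<bullet> d"])
qed

lemma has_real_derivative_le_slope_limit:
  fixes F K :: "real \<Rightarrow> real"
  assumes F: "(F has_real_derivative D) (at 0)" and K: "(K \<longlongrightarrow> l) (at_right 0)"
    and slope: "\<And>\<theta>. 0 < \<theta> \<Longrightarrow> \<theta> < 1 \<Longrightarrow> F \<theta> - F 0 \<le> \<theta> * K \<theta>"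
  shows "D \<le> l"
proof (rule tendsto_le[OF _ K])
  show "((\<lambda>\<theta>. (F \<theta> - F 0) / \<theta>) \<longlongrightarrow> D) (at_right 0)"
    using has_field_derivative_at_within[OF F, of "{0<..}"] unfolding has_field_derivative_iff by simp
  show "eventually (\<lambda>\<theta>. (F \<theta> - F 0) / \<theta> \<le> K \<theta>) (at_right 0)"
    by (rule eventually_at_rightI[of 0 1]) (auto simp: divide_le_eq mult.commute intro: slope)
qed simp

lemma has_real_derivative_ge_slope_limit:
  fixes F K :: "real \<Rightarrow> real"
  assumes F: "(F has_real_derivative D) (at 0)" and K: "(K \<longlongrightarrow> l) (at_right 0)"
    and slope: "\<And>\<theta>. 0 < \<theta> \<Longrightarrow> \<theta> < 1 \<Longrightarrow> \<theta> * K \<theta> \<le> F \<theta> - F 0"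
  shows "l \<le> D"
proof -
  have "- D \<le> - l"
    by (rule has_real_derivative_le_slope_limit[OF DERIV_minus[OF F] tendsto_minus[OF K]])
       (use slope in fastforce)
  then show ?thesis by simp
qed

lemma convex_efun_gradient_ineq:
  assumes pr: "proper_fun f" and cv: "convex_efun f" and g: "has_grad f g x"
  shows "f x + ereal (g \<bullet> (y - x)) \<le> f y"
proof (cases "f y")
  case (real fy)
  obtain fx where fx: "f x = ereal fx" using has_grad_finite[OF g] by (cases "f x") auto
  define F where "F = (\<lambda>\<theta>. real_of_ereal (f (x + \<theta> *\<^sub>R (y - x))))"
  have "g \<bullet> (y - x) \<le> fy - fx"
  proof (rule has_real_derivative_le_slope_limit[OF has_grad_line_derivative[OF g, of "y - x", folded F_def]])
    fix \<theta> :: real assume \<theta>: "0 < \<theta>" "\<theta> < 1"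
    have "f (x + \<theta> *\<^sub>R (y - x)) \<le> ereal (1 - \<theta>) * f x + ereal \<theta> * f y"
      using cv \<theta> unfolding convex_efun_def by simp
    then have "f (x + \<theta> *\<^sub>R (y - x)) \<le> ereal ((1 - \<theta>) * fx + \<theta> * fy)"
      using fx real by simp
    moreover have "f (x + \<theta> *\<^sub>R (y - x)) \<noteq> -\<infinity>" using pr unfolding proper_fun_def by simp
    ultimately have "F \<theta> \<le> (1 - \<theta>) * fx + \<theta> * fy"
      unfolding F_def by (cases "f (x + \<theta> *\<^sub>R (y - x))") auto
    then show "F \<theta> - F 0 \<le> \<theta> * (fy - fx)" using fx by (simp add: F_def algebra_simps)
  qed simp
  then show ?thesis using fx real by simp
qed (use pr has_grad_finite[OF g] in \<open>auto simp: proper_fun_def\<close>)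

lemma conj_fun_at_gradient:
  assumes pr: "proper_fun f" and cv: "convex_efun f" and g: "has_grad f g x"
  shows "conj_fun f g = ereal (g \<bullet> x) - f x"
proof (rule antisym)
  obtain fx where fx: "f x = ereal fx" using has_grad_finite[OF g] by (cases "f x") auto
  show "conj_fun f g \<le> ereal (g \<bullet> x) - f x"
    unfolding conj_fun_def
  proof (rule SUP_least)
    fix y
    have "f x + ereal (g \<bullet> (y - x)) \<le> f y" by (rule convex_efun_gradient_ineq[OF pr cv g])
    then show "ereal (g \<bullet> y) - f y \<le> ereal (g \<bullet> x) - f x"
      using fx pr unfolding proper_fun_def by (cases "f y") (auto simp: inner_diff_right)
  qed
qed (rule conj_fun_ge)

lemma bregman_le_unif_smooth:
  assumes sm: "unif_smooth f N 2 L C" and x: "x \<in> C" and y: "y \<in> C"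
    and g: "has_grad f (gradf x) x"
    and fin: "\<And>\<theta>. \<theta> \<in> {0..1} \<Longrightarrow> \<bar>f (x + \<theta> *\<^sub>R (y - x))\<bar> \<noteq> \<infinity>"
  shows "bregman f gradf y x \<le> ereal (L / 2 * N (y - x) powr 2)"
proof -
  define R where "R = N (y - x) powr 2"
  obtain fx fy where fx: "f x = ereal fx" and fy: "f y = ereal fy"
    using fin[of 0] fin[of 1] by (cases "f x"; cases "f y") auto
  define F where "F = (\<lambda>\<theta>. real_of_ereal (f (x + \<theta> *\<^sub>R (y - x))))"
  have "fy - fx - L / 2 * R \<le> gradf x \<bullet> (y - x)"
  proof (rule has_real_derivative_ge_slope_limit[OF has_grad_line_derivative[OF g, of "y - x", folded F_def]])
    show "((\<lambda>\<theta>. fy - fx - L / 2 * (1 - \<theta>) * R) \<longlongrightarrow> fy - fx - L / 2 * R) (at_right 0)"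
      by (auto intro!: tendsto_eq_intros)
    fix \<theta> :: real assume \<theta>: "0 < \<theta>" "\<theta> < 1"
    have "ereal ((1 - \<theta>) * fx + \<theta> * fy - L / 2 * \<theta> * (1 - \<theta>) * R) \<le> f (x + \<theta> *\<^sub>R (y - x))"
      using sm x y \<theta> fx fy unfolding unif_smooth_def R_def by fastforce
    then have "(1 - \<theta>) * fx + \<theta> * fy - L / 2 * \<theta> * (1 - \<theta>) * R \<le> F \<theta>"
      using fin[of \<theta>] \<theta> unfolding F_def by (cases "f (x + \<theta> *\<^sub>R (y - x))") auto
    then show "\<theta> * (fy - fx - L / 2 * (1 - \<theta>) * R) \<le> F \<theta> - F 0"
      using fx by (simp add: F_def algebra_simps)
  qed
  then show ?thesis unfolding bregman_def R_def using fx fy by simp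
qed

locale composite_objective =
  fixes f Psi :: "'a::euclidean_space \<Rightarrow> ereal" and gradf :: "'a \<Rightarrow> 'a"
  assumes f_proper: "proper_fun f" and f_convex: "convex_efun f"
    and Psi_closed: "closed_fun Psi" and Psi_proper: "proper_fun Psi" and Psi_convex: "convex_efun Psi"
    and has_grad_edom: "\<And>x. x \<in> edom Psi \<Longrightarrow> has_grad f (gradf x) x"
begin

lemma subgradient_edom: "s \<in> esubdiff (conj_fun Psi) u \<Longrightarrow> s \<in> edom Psi"
  by (rule esubdiff_conj_fun_edom[OF Psi_closed Psi_proper Psi_convex])

lemma subgradient_optimal:
  assumes "s \<in> esubdiff (conj_fun Psi) (- gradf x)"
  shows "ereal (gradf x \<bullet> s) + Psi s \<le> ereal (gradf x \<bullet> y) + Psi y"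
  using esubdiff_conj_fun_argmin[OF Psi_closed Psi_proper Psi_convex assms]
  unfolding argmin_lin_def by simp

lemma gap_at_subgradient:
  assumes x: "x \<in> edom Psi" and s: "s \<in> esubdiff (conj_fun Psi) (- gradf x)"
  shows "gap f Psi x (gradf x) = Psi x - Psi s + ereal (gradf x \<bullet> (x - s))"
proof -
  obtain fx where fx: "f x = ereal fx"
    using has_grad_finite[OF has_grad_edom[OF x]] by (cases "f x") auto
  obtain px ps where "Psi x = ereal px" "Psi s = ereal ps"
    using edom_finite[OF Psi_proper x] edom_finite[OF Psi_proper subgradient_edom[OF s]] by metis
  with fx show ?thesis
    unfolding gap_def conj_fun_at_gradient[OF f_proper f_convex has_grad_edom[OF x]]
      esubdiff_conj_fun_eq[OF Psi_closed Psi_proper Psi_convex s]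
    by (simp add: inner_diff_right)
qed

lemma Dcal_le_bregman:
  assumes x: "x \<in> edom Psi" and s: "s \<in> edom Psi" and \<theta>: "\<theta> \<in> {0..1}"
  shows "Dcal f Psi gradf x s \<theta> \<le> bregman f gradf (x + \<theta> *\<^sub>R (s - x)) x"
proof -
  define y where "y = x + \<theta> *\<^sub>R (s - x)"
  obtain px ps py where p: "Psi x = ereal px" "Psi s = ereal ps" "Psi y = ereal py"
    using edom_finite[OF Psi_proper] x s edom_segment[OF Psi_proper Psi_convex x s \<theta>]
    unfolding y_def by metis
  have "Psi y \<le> ereal (1 - \<theta>) * Psi x + ereal \<theta> * Psi s"
    using Psi_convex \<theta> unfolding convex_efun_def y_def by blast
  then have "py - (1 - \<theta>) * px - \<theta> * ps \<le> 0" using p by simp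
  then show ?thesis
    unfolding Dcal_def y_def[symmetric] using p by (cases "bregman f gradf y x") auto
qed

lemma bregman_segment_le:
  assumes N: "is_norm N" and smooth: "unif_smooth f N 2 L (edom Psi)"
    and x: "x \<in> edom Psi" and s: "s \<in> edom Psi" and \<theta>: "\<theta> \<in> {0..1}"
  shows "bregman f gradf (x + \<theta> *\<^sub>R (s - x)) x \<le> ereal (L / 2 * \<theta>\<^sup>2 * (N (s - x))\<^sup>2)"
proof -
  define y where "y = x + \<theta> *\<^sub>R (s - x)"
  have y: "y \<in> edom Psi" unfolding y_def by (rule edom_segment[OF Psi_proper Psi_convex x s \<theta>])
  have "bregman f gradf y x \<le> ereal (L / 2 * N (y - x) powr 2)"
  proof (rule bregman_le_unif_smooth[where gradf = gradf, OF smooth x y has_grad_edom[OF x]])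
    fix \<tau> :: real assume "\<tau> \<in> {0..1}"
    then show "\<bar>f (x + \<tau> *\<^sub>R (y - x))\<bar> \<noteq> \<infinity>"
      by (intro has_grad_finite[OF has_grad_edom] edom_segment[OF Psi_proper Psi_convex x y])
  qed
  moreover have "N (y - x) powr 2 = \<theta>\<^sup>2 * (N (s - x))\<^sup>2"
    using N \<theta> unfolding is_norm_powr_two[OF N] is_norm_def y_def by (simp add: power_mult_distrib)
  ultimately show ?thesis unfolding y_def by (simp add: mult.assoc)
qed

lemma growth21_of_quadratic_gap:
  assumes N: "is_norm N" and L: "L \<ge> 0" and smooth: "unif_smooth f N 2 L (edom Psi)"
    and \<kappa>: "\<kappa> > 0"
    and gap_ge: "\<And>x s. x \<in> edom Psi \<Longrightarrow> s \<in> esubdiff (conj_fun Psi) (- gradf x) \<Longrightarrow>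
      ereal (\<kappa> * (N (s - x))\<^sup>2) \<le> gap f Psi x (gradf x)"
  shows "growth21 f Psi gradf (L / \<kappa>)"
  unfolding growth21_def
proof (intro ballI)
  fix x s \<theta> assume x: "x \<in> edom Psi" and s: "s \<in> esubdiff (conj_fun Psi) (- gradf x)"
    and \<theta>: "\<theta> \<in> {0..1::real}"
  have "Dcal f Psi gradf x s \<theta> \<le> bregman f gradf (x + \<theta> *\<^sub>R (s - x)) x"
    by (rule Dcal_le_bregman[OF x subgradient_edom[OF s] \<theta>])
  also have "\<dots> \<le> ereal (L / 2 * \<theta>\<^sup>2 * (N (s - x))\<^sup>2)"
    by (rule bregman_segment_le[OF N smooth x subgradient_edom[OF s] \<theta>])
  also have "\<dots> = ereal (L / \<kappa> * \<theta>\<^sup>2 / 2) * ereal (\<kappa> * (N (s - x))\<^sup>2)"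
    using \<kappa> by simp
  also have "\<dots> \<le> ereal (L / \<kappa> * \<theta>\<^sup>2 / 2) * gap f Psi x (gradf x)"
    by (rule ereal_mult_left_mono[OF gap_ge[OF x s]]) (use L \<kappa> in simp)
  finally show "Dcal f Psi gradf x s \<theta> \<le> ereal (L / \<kappa> * \<theta>\<^sup>2 / 2) * gap f Psi x (gradf x)" .
qed

lemma gap_ge_unif_convex_fun:
  assumes N: "is_norm N" and uc: "unif_convex_fun Psi N 2 \<mu> (edom Psi)"
    and x: "x \<in> edom Psi" and s: "s \<in> esubdiff (conj_fun Psi) (- gradf x)"
  shows "ereal (\<mu> / 2 * (N (s - x))\<^sup>2) \<le> gap f Psi x (gradf x)"
proof -
  define g where "g = gradf x"
  have s': "s \<in> edom Psi" by (rule subgradient_edom[OF s])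
  obtain px ps where p: "Psi x = ereal px" "Psi s = ereal ps"
    using edom_finite[OF Psi_proper x] edom_finite[OF Psi_proper s'] by metis
  define G where "G = px - ps + g \<bullet> (x - s)"
  have "\<mu> / 2 * (N (s - x))\<^sup>2 \<le> G"
  proof (rule field_le_mult_one_interval)
    fix \<tau> :: real assume \<tau>: "0 < \<tau>" "\<tau> < 1"
    obtain pt where pt: "Psi (x + \<tau> *\<^sub>R (s - x)) = ereal pt"
      using edom_finite[OF Psi_proper edom_segment[OF Psi_proper Psi_convex x s', of \<tau>]] \<tau> by auto
    have "Psi (x + \<tau> *\<^sub>R (s - x)) \<le> ereal (1 - \<tau>) * Psi x + ereal \<tau> * Psi s
        - ereal (\<mu> / 2 * \<tau> * (1 - \<tau>) * N (s - x) powr 2)"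
      using uc x s' \<tau> unfolding unif_convex_fun_def by auto
    then have "pt \<le> (1 - \<tau>) * px + \<tau> * ps - \<mu> / 2 * \<tau> * (1 - \<tau>) * (N (s - x))\<^sup>2"
      using pt p by (simp add: is_norm_powr_two[OF N])
    moreover have "g \<bullet> s + ps \<le> g \<bullet> (x + \<tau> *\<^sub>R (s - x)) + pt"
      using subgradient_optimal[OF s, of "x + \<tau> *\<^sub>R (s - x)"] pt p unfolding g_def by simp
    ultimately have "(1 - \<tau>) * (\<tau> * (\<mu> / 2 * (N (s - x))\<^sup>2)) \<le> (1 - \<tau>) * G"
      unfolding G_def by (simp add: algebra_simps inner_diff_right)
    then show "\<tau> * (\<mu> / 2 * (N (s - x))\<^sup>2) \<le> G" using \<tau> by simp
  qed
  then show ?thesis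
    using gap_at_subgradient[OF x s] p unfolding G_def g_def by simp
qed

lemma gap_ge_unif_convex_set:
  assumes N: "is_norm N" and Psi: "Psi = indicator_e C" and uc: "unif_convex_set C N 2 \<mu>"
    and x: "x \<in> edom Psi" and s: "s \<in> esubdiff (conj_fun Psi) (- gradf x)"
  shows "ereal (\<mu> / 2 * dual_norm N (gradf x) * (N (s - x))\<^sup>2) \<le> gap f Psi x (gradf x)"
proof -
  define g where "g = gradf x"
  define G where "G = g \<bullet> (x - s)"
  have edom_C: "edom Psi = C" unfolding Psi edom_def indicator_e_def by auto
  have C: "x \<in> C" "s \<in> C" using x subgradient_edom[OF s] edom_C by auto
  have min: "g \<bullet> s \<le> g \<bullet> y" if "y \<in> C" for y
    using subgradient_optimal[OF s, of y] that C unfolding Psi indicator_e_def g_def by simp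
  have "\<mu> / 2 * dual_norm N g * (N (s - x))\<^sup>2 \<le> G"
  proof (rule field_le_mult_one_interval)
    fix \<tau> :: real assume \<tau>: "0 < \<tau>" "\<tau> < 1"
    define c where "c = \<mu> / 2 * \<tau> * (1 - \<tau>) * (N (s - x))\<^sup>2"
    define y where "y = x + \<tau> *\<^sub>R (s - x)"
    have y: "g \<bullet> y - g \<bullet> s = (1 - \<tau>) * G"
      unfolding y_def G_def by (simp add: algebra_simps inner_diff_right)
    \<comment> \<open>the ball of radius \<open>c\<close> around \<open>y\<close> lies in \<open>C\<close>, and \<open>s\<close> minimises \<open>g\<close> over it\<close>
    have ball: "c * (g \<bullet> z) \<le> (1 - \<tau>) * G" if "N z \<le> 1" for z
    proof -
      have "N (- z) \<le> 1" using is_norm_minus[OF N] that by simp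
      moreover have "\<forall>\<theta>\<in>{0..1}. \<forall>z. N z \<le> 1 \<longrightarrow>
          x + \<theta> *\<^sub>R (s - x) + (\<mu> / 2 * \<theta> * (1 - \<theta>) * N (s - x) powr 2) *\<^sub>R z \<in> C"
        using uc C unfolding unif_convex_set_def by blast
      ultimately have "y + c *\<^sub>R (- z) \<in> C"
        using \<tau> unfolding y_def c_def is_norm_powr_two[OF N] by (metis atLeastAtMost_iff less_eq_real_def)
      from min[OF this] show ?thesis using y by (simp add: inner_diff_right)
    qed
    have "c * dual_norm N g \<le> (1 - \<tau>) * G"
    proof (cases "c > 0")
      case True
      have "dual_norm N g \<le> (1 - \<tau>) * G / c"
        by (rule dual_norm_le[OF N]) (use ball True in \<open>simp add: le_divide_eq mult.commute\<close>)
      then show ?thesis using True by (simp add: le_divide_eq mult.commute)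
    next
      case False
      then have "c * dual_norm N g \<le> 0" by (simp add: mult_nonpos_nonneg dual_norm_nonneg[OF N])
      also have "0 \<le> (1 - \<tau>) * G" using ball[of 0] is_norm_zero[OF N] by simp
      finally show ?thesis .
    qed
    then have "(1 - \<tau>) * (\<tau> * (\<mu> / 2 * dual_norm N g * (N (s - x))\<^sup>2)) \<le> (1 - \<tau>) * G"
      unfolding c_def by (simp add: algebra_simps)
    then show "\<tau> * (\<mu> / 2 * dual_norm N g * (N (s - x))\<^sup>2) \<le> G" using \<tau> by simp
  qed
  moreover have "Psi x = 0" "Psi s = 0" using C unfolding Psi indicator_e_def by auto
  ultimately show ?thesis
    using gap_at_subgradient[OF x s] unfolding G_def g_def by simp
qed

lemma gap_ge_unif_convex_set_Inf:
  assumes N: "is_norm N" and Psi: "Psi = indicator_e C" and uc: "unif_convex_set C N 2 \<mu>"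
    and \<mu>: "\<mu> \<ge> 0" and x: "x \<in> edom Psi" and s: "s \<in> esubdiff (conj_fun Psi) (- gradf x)"
  shows "ereal (Inf ((\<lambda>x. dual_norm N (gradf x)) ` C) * \<mu> / 2 * (N (s - x))\<^sup>2) \<le> gap f Psi x (gradf x)"
proof -
  have "x \<in> C" using x Psi by (simp add: edom_def indicator_e_def split: if_splits)
  then have "Inf ((\<lambda>x. dual_norm N (gradf x)) ` C) \<le> dual_norm N (gradf x)"
    by (intro cInf_lower bdd_belowI[of _ 0]) (auto simp: dual_norm_nonneg[OF N])
  then have "Inf ((\<lambda>x. dual_norm N (gradf x)) ` C) * \<mu> / 2 * (N (s - x))\<^sup>2
      \<le> \<mu> / 2 * dual_norm N (gradf x) * (N (s - x))\<^sup>2"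
    using \<mu> by (intro mult_right_mono) (auto simp: mult.commute intro: mult_left_mono)
  then show ?thesis
    using gap_ge_unif_convex_set[OF N Psi uc x s] by (meson ereal_less_eq(3) order_trans)
qed

end

theorem proposition3:
  fixes f Psi :: "'a::euclidean_space \<Rightarrow> ereal" and gradf :: "'a \<Rightarrow> 'a"
    and N :: "'a \<Rightarrow> real" and L :: real
  assumes f_cpc: "closed_fun f" "proper_fun f" "convex_efun f"
    and Psi_cpc: "closed_fun Psi" "proper_fun Psi" "convex_efun Psi"
    and A1: "\<forall>x\<in>edom Psi. has_grad f (gradf x) x"
    and A2: "\<forall>x\<in>edom Psi. argmin_lin (gradf x) Psi \<noteq> {}"
    and N: "is_norm N" and L: "L > 0"
    and smooth: "unif_smooth f N 2 L (edom Psi)"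
  shows "(\<forall>\<mu>>0. unif_convex_fun Psi N 2 \<mu> (edom Psi) \<longrightarrow> growth21 f Psi gradf (2 * L / \<mu>))
       \<and> (\<forall>C \<mu>. closed C \<and> convex C \<and> Psi = indicator_e C \<and> \<mu> > 0
            \<and> unif_convex_set C N 2 \<mu> \<and> Inf ((\<lambda>x. dual_norm N (gradf x)) ` C) > 0
            \<longrightarrow> growth21 f Psi gradf (2 * L / (Inf ((\<lambda>x. dual_norm N (gradf x)) ` C) * \<mu>)))"
proof -
  interpret composite_objective f Psi gradf
    using f_cpc Psi_cpc A1 by unfold_locales auto
  have L0: "L \<ge> 0" using L by simp
  have "growth21 f Psi gradf (2 * L / \<mu>)"
    if "\<mu> > 0" "unif_convex_fun Psi N 2 \<mu> (edom Psi)" for \<mu>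
    using growth21_of_quadratic_gap[OF N L0 smooth, of "\<mu> / 2"]
      gap_ge_unif_convex_fun[OF N that(2)] that(1)
    by (simp add: ac_simps)
  moreover have "growth21 f Psi gradf (2 * L / (Inf ((\<lambda>x. dual_norm N (gradf x)) ` C) * \<mu>))"
    if "Psi = indicator_e C" "\<mu> > 0" "unif_convex_set C N 2 \<mu>"
      "Inf ((\<lambda>x. dual_norm N (gradf x)) ` C) > 0" for C \<mu>
    using growth21_of_quadratic_gap[OF N L0 smooth, of "Inf ((\<lambda>x. dual_norm N (gradf x)) ` C) * \<mu> / 2"]
      gap_ge_unif_convex_set_Inf[OF N that(1,3)] that(2,4)
    by (simp add: ac_simps)
  ultimately show ?thesis by blast
qed

end
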